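(* Let $\mathcal P$ be an independent meeting pattern and suppose that under algorithm ALG sensor $a$ observes sensor $b$ at round $t$, and that $c_b(t)\ge J_b(t)/\Delta_0$. Then $$c_a(t+1)-c_a(t)\;\ge\;\frac{1}{\Delta_0}\cdot\frac{1}{\frac{1}{J_b(t)}+\frac{1}{J_N}}.$$
   Context: Model. Fix a finite set $\mathcal F$ of smooth probability densities on $\mathbb R$, each with mean zero and finite variance; a density $\Phi$ is smooth if $\Phi(x)>0$ for all $x\in\mathbb R$, $\Phi'$ exists, and $J_\Phi:=\int_{\mathbb R}\Phi'(y)^2/\Phi(y)\,dy<\infty$. One element $N\in\mathcal F$ is the noise density; $J_N$ is its Fisher information and $\mathrm{var}(N)$ its variance. There are $n$ sensors; each sensor $a$ is assigned $\Phi_a\in\mathcal F$. An unknown $\tau^*\in\mathbb R$ is fixed, and the initial opinions $X_a(0)$ are independent, $X_a(0)$ having density $\Phi_a(x-\tau^* )$. Rounds are $t=0,1,2,\dots$. A meeting pattern $\mathcal P$ specifies in advance, for each round $t$ and each sensor $a$, at most one other sensor $b$ that $a$ observes at round $t$; each observation carries its own noise with density $N$, independent of everything else. $\mathcal P$ is independent if, with $R_a(0)=\{a\}$ and $R_a(t+1)=R_a(t)\cup R_b(t)$ when $a$ observes $b$ at round $t$ (else $R_a(t+1)=R_a(t)$), one has $R_a(t)\cap R_b(t)=\emptyset$ whenever $a$ observes $b$ at round $t$. Fisher information of a sensor. Histories: $H_a(0)=\emptyset$; if $a$ observes $b$ at round $t$ then $H_a(t+1)=H_a(t)\cup H_b(t)\cup\{(a,b,t)\}$,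 otherwise $H_a(t+1)=H_a(t)$. For an observation event $e=(c,d,s)$ with noise $\eta_e$, set $D_e=X_d(0)-X_c(0)+\eta_e$. $M_a(t)=(X_a(0),(D_e)_{e\in H_a(t)})$; $J_a(t)$ is the Fisher information of the law of $M_a(t)$ with respect to the translation parameter $\tau=\tau^*$. Algorithm ALG. Accuracies: $c_a(0)=1/\mathrm{var}(\Phi_a)$; if $a$ observes $b$ at round $t$, $c_a(t+1)=c_a(t)+\hat c_b(t)$ with $\hat c_b(t)=c_b(t)/(1+c_b(t)\,\mathrm{var}(N))$, otherwise $c_a(t+1)=c_a(t)$. (Opinions are updated by $x_a(t+1)=x_a(t)+\tilde d_{ab}(t)\hat c_b(t)/(c_a(t)+\hat c_b(t))$.) Fisher-tightness. For $\Phi\in\mathcal F$, $\Delta(\Phi)=\mathrm{var}(\Phi)\,J_\Phi$, and $\Delta_0=\max_{\Phi\in\mathcal F}\Delta(\Phi)$ (recall $N\in\mathcal F$). *)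

theory Defs
  imports "HOL-Probability.Probability"
begin

definition prob_density :: "(real \<Rightarrow> real) \<Rightarrow> bool" where
  "prob_density \<Phi> \<longleftrightarrow> \<Phi> \<in> borel_measurable borel \<and> (\<forall>x. 0 \<le> \<Phi> x)
     \<and> integrable lborel \<Phi> \<and> (\<integral>x. \<Phi> x \<partial>lborel) = 1
     \<and> integrable lborel (\<lambda>x. x * \<Phi> x) \<and> (\<integral>x. x * \<Phi> x \<partial>lborel) = 0
     \<and> integrable lborel (\<lambda>x. x\<^sup>2 * \<Phi> x)"

definition dvar :: "(real \<Rightarrow> real) \<Rightarrow> real" where
  "dvar \<Phi> = (\<integral>x. x\<^sup>2 * \<Phi> x \<partial>lborel)"

definition dfisher :: "(real \<Rightarrow> real) \<Rightarrow> real" where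
  "dfisher \<Phi> = (\<integral>y. (deriv \<Phi> y)\<^sup>2 / \<Phi> y \<partial>lborel)"

definition smooth_density :: "(real \<Rightarrow> real) \<Rightarrow> bool" where
  "smooth_density \<Phi> \<longleftrightarrow> prob_density \<Phi> \<and> (\<forall>x. 0 < \<Phi> x)
     \<and> (\<forall>x. \<Phi> differentiable (at x))
     \<and> integrable lborel (\<lambda>y. (deriv \<Phi> y)\<^sup>2 / \<Phi> y)"

definition Delta :: "(real \<Rightarrow> real) \<Rightarrow> real" where
  "Delta \<Phi> = dvar \<Phi> * dfisher \<Phi>"

definition Delta0 :: "(real \<Rightarrow> real) set \<Rightarrow> real" where
  "Delta0 F = Max (Delta ` F)"

text \<open>A meeting pattern: P t a = Some b means sensor a observes sensor b
  (b different from a) at round t; None means a observes nobody at round t.\<close>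
definition meeting_pattern :: "(nat \<Rightarrow> 's \<Rightarrow> 's option) \<Rightarrow> bool" where
  "meeting_pattern P \<longleftrightarrow> (\<forall>t a b. P t a = Some b \<longrightarrow> b \<noteq> a)"

fun reach :: "(nat \<Rightarrow> 's \<Rightarrow> 's option) \<Rightarrow> nat \<Rightarrow> 's \<Rightarrow> 's set" where
  "reach P 0 a = {a}"
| "reach P (Suc t) a = (case P t a of None \<Rightarrow> reach P t a
                         | Some b \<Rightarrow> reach P t a \<union> reach P t b)"

definition independent_pattern :: "(nat \<Rightarrow> 's \<Rightarrow> 's option) \<Rightarrow> bool" where
  "independent_pattern P \<longleftrightarrow>
     (\<forall>t a b. P t a = Some b \<longrightarrow> reach P t a \<inter> reach P t b = {})"

text \<open>Histories; an observation event (c,d,s) means c observes d at round s.\<close>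
fun history :: "(nat \<Rightarrow> 's \<Rightarrow> 's option) \<Rightarrow> nat \<Rightarrow> 's \<Rightarrow> ('s \<times> 's \<times> nat) set" where
  "history P 0 a = {}"
| "history P (Suc t) a = (case P t a of None \<Rightarrow> history P t a
                           | Some b \<Rightarrow> history P t a \<union> history P t b \<union> {(a, b, t)})"

definition chat :: "(real \<Rightarrow> real) \<Rightarrow> real \<Rightarrow> real" where
  "chat N c = c / (1 + c * dvar N)"

fun acc :: "(nat \<Rightarrow> 's \<Rightarrow> 's option) \<Rightarrow> ('s \<Rightarrow> real \<Rightarrow> real) \<Rightarrow> (real \<Rightarrow> real)
             \<Rightarrow> nat \<Rightarrow> 's \<Rightarrow> real" where
  "acc P \<Phi> N 0 a = 1 / dvar (\<Phi> a)"
| "acc P \<Phi> N (Suc t) a = (case P t a of None \<Rightarrow> acc P \<Phi> N t a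
                           | Some b \<Rightarrow> acc P \<Phi> N t a + chat N (acc P \<Phi> N t b))"

definition density_family ::
  "'b measure \<Rightarrow> (real \<Rightarrow> 'b measure) \<Rightarrow> real \<Rightarrow> (real \<Rightarrow> 'b \<Rightarrow> real) \<Rightarrow> bool" where
  "density_family \<mu> Q \<tau>0 f \<longleftrightarrow>
     (\<forall>\<tau>. Q \<tau> = density \<mu> (\<lambda>m. ennreal (f \<tau> m)))
     \<and> (\<lambda>(\<tau>, m). f \<tau> m) \<in> borel_measurable (borel \<Otimes>\<^sub>M \<mu>)
     \<and> (\<forall>\<tau> m. 0 \<le> f \<tau> m)
     \<and> (AE m in \<mu>. (\<lambda>\<tau>. f \<tau> m) differentiable (at \<tau>0))"

definition fisher_info :: "'b measure \<Rightarrow> (real \<Rightarrow> 'b measure) \<Rightarrow> real \<Rightarrow> real" where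
  "fisher_info \<mu> Q \<tau>0 =
     (let f = (SOME f. density_family \<mu> Q \<tau>0 f)
      in enn2real (\<integral>\<^sup>+ m. ennreal ((deriv (\<lambda>\<tau>. f \<tau> m) \<tau>0)\<^sup>2 / f \<tau>0 m) \<partial>\<mu>))"

text \<open>Underlying sensor_experiment with parameter tau: independent initial opinions X_c(0) with
  density Phi_c(x - tau), and independent observation noises eta_e (density N) for the
  events e in E.\<close>
definition sensor_experiment ::
  "('s::finite \<Rightarrow> real \<Rightarrow> real) \<Rightarrow> (real \<Rightarrow> real) \<Rightarrow> ('s \<times> 's \<times> nat) set \<Rightarrow> real
    \<Rightarrow> (('s \<Rightarrow> real) \<times> (('s \<times> 's \<times> nat) \<Rightarrow> real)) measure" where
  "sensor_experiment \<Phi> N E \<tau> =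
     (\<Pi>\<^sub>M c\<in>UNIV. density lborel (\<lambda>x. ennreal (\<Phi> c (x - \<tau>))))
       \<Otimes>\<^sub>M (\<Pi>\<^sub>M e\<in>E. density lborel (\<lambda>x. ennreal (N x)))"

text \<open>Space of values of M_a(t) = (X_a(0), (D_e)_{e in E}).\<close>
definition obs_space :: "('s \<times> 's \<times> nat) set \<Rightarrow> (real \<times> (('s \<times> 's \<times> nat) \<Rightarrow> real)) measure" where
  "obs_space E = lborel \<Otimes>\<^sub>M (\<Pi>\<^sub>M e\<in>E. lborel)"

text \<open>Law of M_a(t) under parameter tau, where E = H_a(t); D_e = X_d(0) - X_c(0) + eta_e
  for e = (c,d,s).\<close>
definition sensor_law ::
  "('s::finite \<Rightarrow> real \<Rightarrow> real) \<Rightarrow> (real \<Rightarrow> real) \<Rightarrow> ('s \<times> 's \<times> nat) set \<Rightarrow> 's \<Rightarrow> real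
    \<Rightarrow> (real \<times> (('s \<times> 's \<times> nat) \<Rightarrow> real)) measure" where
  "sensor_law \<Phi> N E a \<tau> =
     distr (sensor_experiment \<Phi> N E \<tau>) (obs_space E)
       (\<lambda>(X, \<eta>). (X a, \<lambda>e\<in>E. X (fst (snd e)) - X (fst e) + \<eta> e))"

definition sensor_fisher ::
  "(nat \<Rightarrow> 's::finite \<Rightarrow> 's option) \<Rightarrow> ('s \<Rightarrow> real \<Rightarrow> real) \<Rightarrow> (real \<Rightarrow> real) \<Rightarrow> real
    \<Rightarrow> nat \<Rightarrow> 's \<Rightarrow> real" where
  "sensor_fisher P \<Phi> N \<tau>star t a =
     fisher_info (obs_space (history P t a)) (sensor_law \<Phi> N (history P t a) a) \<tau>star"

end

theory Submission
  imports Defs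
begin

text \<open>The increment of \<open>c\<^sub>a\<close> is \<open>\<hat>c\<^sub>b = 1/(1/c\<^sub>b + var N)\<close>, which is monotone in \<open>c\<^sub>b\<close>.
  Substituting the hypothesis \<open>c\<^sub>b \<ge> J\<^sub>b/\<Delta>\<^sub>0\<close> and using \<open>var N \<le> \<Delta>\<^sub>0/J\<^sub>N\<close> (as \<open>N \<in> \<F>\<close>)
  gives \<open>\<hat>c\<^sub>b \<ge> 1/(\<Delta>\<^sub>0/J\<^sub>b + \<Delta>\<^sub>0/J\<^sub>N)\<close>.\<close>

lemma frac_one_plus_mult_mono:
  fixes v x y :: real
  assumes "0 \<le> v" "0 \<le> x" "x \<le> y"
  shows "x / (1 + x * v) \<le> y / (1 + y * v)"
proof -
  have "x * (1 + y * v) \<le> y * (1 + x * v)"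
    using assms by (simp add: algebra_simps)
  moreover have "0 < 1 + x * v" "0 < 1 + y * v"
    using assms by (simp_all add: add_pos_nonneg)
  ultimately show ?thesis
    by (simp add: divide_le_eq le_divide_eq field_simps)
qed

lemma harmonic_le_frac_one_plus_mult:
  fixes D J JN v :: real
  assumes "0 \<le> J" "0 \<le> JN" "0 \<le> v" "v * JN \<le> D"
  shows "(1 / D) * (J * JN / (J + JN)) \<le> (J / D) / (1 + (J / D) * v)"
proof (cases "D = 0 \<or> J = 0 \<or> JN = 0")
  case True
  then show ?thesis
    using assms by (auto intro!: divide_nonneg_nonneg)
next
  case False
  moreover have "0 \<le> D"
    using assms by (meson mult_nonneg_nonneg order_trans)
  ultimately have pos: "0 < D" "0 < J" "0 < JN"
    using assms by auto
  have "J * (v * JN) \<le> J * D"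
    using assms by (simp add: mult_left_mono)
  then have "JN * (D + J * v) \<le> D * (J + JN)"
    by (simp add: algebra_simps)
  then have "JN / (J + JN) \<le> D / (D + J * v)"
    using pos assms by (simp add: divide_le_eq le_divide_eq add_pos_nonneg algebra_simps)
  then have "J / D * (JN / (J + JN)) \<le> J / D * (D / (D + J * v))"
    using pos by (intro mult_left_mono) simp_all
  also have "\<dots> = (J / D) / (1 + (J / D) * v)"
    using pos by (simp add: field_simps)
  finally show ?thesis
    by simp
qed
lemma dvar_nonneg: "prob_density \<Phi> \<Longrightarrow> 0 \<le> dvar \<Phi>"
  unfolding dvar_def prob_density_def by (intro integral_nonneg_AE) auto

lemma dfisher_nonneg: "smooth_density \<Phi> \<Longrightarrow> 0 \<le> dfisher \<Phi>"
  unfolding dfisher_def smooth_density_def by (intro integral_nonneg_AE) (simp add: less_imp_le)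

lemma sensor_fisher_nonneg: "0 \<le> sensor_fisher P \<Phi> N \<tau> t a"
  unfolding sensor_fisher_def fisher_info_def Let_def by simp

lemma Delta_le_Delta0: "finite F \<Longrightarrow> \<Psi> \<in> F \<Longrightarrow> Delta \<Psi> \<le> Delta0 F"
  unfolding Delta0_def by simp

theorem mainTheorem8:
  fixes F :: "(real \<Rightarrow> real) set"
    and N :: "real \<Rightarrow> real"
    and \<Phi> :: "'s::finite \<Rightarrow> real \<Rightarrow> real"
    and P :: "nat \<Rightarrow> 's \<Rightarrow> 's option"
    and \<tau>star :: real
    and a b :: 's
    and t :: nat
  assumes "finite F"
    and "\<forall>\<Psi>\<in>F. smooth_density \<Psi>"
    and "N \<in> F"
    and "\<forall>c. \<Phi> c \<in> F"
    and "meeting_pattern P"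
    and "independent_pattern P"
    and "P t a = Some b"
    and "acc P \<Phi> N t b \<ge> sensor_fisher P \<Phi> N \<tau>star t b / Delta0 F"
  shows "acc P \<Phi> N (Suc t) a - acc P \<Phi> N t a \<ge>
           (1 / Delta0 F) * (sensor_fisher P \<Phi> N \<tau>star t b * dfisher N
                             / (sensor_fisher P \<Phi> N \<tau>star t b + dfisher N))"
proof -
  let ?J = "sensor_fisher P \<Phi> N \<tau>star t b" and ?D = "Delta0 F"
  have "smooth_density N"
    using assms(2,3) by blast
  then have v: "0 \<le> dvar N" and JN: "0 \<le> dfisher N"
    by (simp_all add: dvar_nonneg dfisher_nonneg smooth_density_def)
  have DN: "dvar N * dfisher N \<le> ?D"
    using Delta_le_Delta0[OF assms(1,3)] by (simp add: Delta_def)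
  then have D: "0 \<le> ?D"
    using v JN by (meson mult_nonneg_nonneg order_trans)
  have "(1 / ?D) * (?J * dfisher N / (?J + dfisher N)) \<le> chat N (?J / ?D)"
    unfolding chat_def using sensor_fisher_nonneg JN v DN
    by (intro harmonic_le_frac_one_plus_mult) (simp_all add: mult.commute)
  also have "\<dots> \<le> chat N (acc P \<Phi> N t b)"
    unfolding chat_def using assms(8) v D sensor_fisher_nonneg
    by (intro frac_one_plus_mult_mono divide_nonneg_nonneg) simp_all
  also have "\<dots> = acc P \<Phi> N (Suc t) a - acc P \<Phi> N t a"
    using assms(7) by simp
  finally show ?thesis .
qed

end
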